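(* Let $R$ be a commutative Noetherian domain which is an algebra over an uncountable field but is not itself a field. Suppose there is a countable multiplicatively closed subset $\mathcal A\subseteq R\setminus\{0\}$ such that $R\mathcal A^{-1}$ is the quotient field of $R$. Then $R$ has Krull dimension $1$ and $\mathrm{Spec}(R)$ is countable. *)

theory Defs
  imports Main "HOL-Library.Extended_Nat" "HOL-Library.Countable_Set"
    "HOL-Computational_Algebra.Fraction_Field"
begin

definition is_ideal :: "'a::comm_ring_1 set \<Rightarrow> bool" where
  "is_ideal I \<longleftrightarrow> 0 \<in> I \<and> (\<forall>x\<in>I. \<forall>y\<in>I. x + y \<in> I) \<and> (\<forall>r. \<forall>x\<in>I. r * x \<in> I)"

definition is_prime_ideal :: "'a::comm_ring_1 set \<Rightarrow> bool" where
  "is_prime_ideal P \<longleftrightarrow> is_ideal P \<and> P \<noteq> UNIV \<and> (\<forall>x y. x * y \<in> P \<longrightarrow> x \<in> P \<or> y \<in> P)"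

definition gen_ideal :: "'a::comm_ring_1 set \<Rightarrow> 'a set" where
  "gen_ideal F = {x. \<exists>c. x = (\<Sum>f\<in>F. c f * f)}"

definition noetherian :: "'a::comm_ring_1 itself \<Rightarrow> bool" where
  "noetherian _ \<longleftrightarrow> (\<forall>I::'a set. is_ideal I \<longrightarrow> (\<exists>F. finite F \<and> I = gen_ideal F))"

definition krull_dim :: "'a::comm_ring_1 itself \<Rightarrow> enat" where
  "krull_dim _ = Sup {enat n | n. \<exists>P :: nat \<Rightarrow> 'a set.
      (\<forall>i\<le>n. is_prime_ideal (P i)) \<and> (\<forall>i<n. P i \<subset> P (Suc i))}"

text \<open>Unital ring homomorphism (structure map making R a k-algebra).\<close>
definition is_ring_hom :: "('k::comm_ring_1 \<Rightarrow> 'a::comm_ring_1) \<Rightarrow> bool" where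
  "is_ring_hom \<phi> \<longleftrightarrow> \<phi> 1 = 1 \<and> (\<forall>x y. \<phi> (x + y) = \<phi> x + \<phi> y) \<and> (\<forall>x y. \<phi> (x * y) = \<phi> x * \<phi> y)"

end

theory Submission
  imports Defs "HOL-Computational_Algebra.Polynomial"
begin

text \<open>Every fraction \<open>1 / z\<close> has a denominator in \<open>A\<close>, so every nonzero prime contains an element
  of \<open>A\<close>; a prime of height one is then minimal over a principal ideal \<open>(a)\<close> with \<open>a \<in> A\<close>, and since
  each \<open>(a)\<close> has only finitely many minimal primes, there are only countably many primes of
  height one.  A chain \<open>0 \<subset> P \<subset> Q\<close> is impossible: by Krull's principal ideal theorem every nonzero
  element of \<open>Q\<close> lies in a height-one prime strictly below \<open>Q\<close>, so \<open>Q\<close> would be covered by countably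
  many ideals not containing it, which an uncountable ground field rules out.  Hence all nonzero
  primes have height one, \<open>dim R = 1\<close> as \<open>R\<close> is not a field, and \<open>Spec R\<close> is countable.
  The principal ideal theorem is proved in the classical way, from the Artinian ring \<open>R\<^sub>Q / (y)\<close>
  and the symbolic powers of a nonzero element of a smaller prime.\<close>

section \<open>Ideals and Noetherian rings\<close>

lemma is_ideal_0: "is_ideal I \<Longrightarrow> 0 \<in> I"
  by (simp add: is_ideal_def)

lemma is_ideal_add: "is_ideal I \<Longrightarrow> x \<in> I \<Longrightarrow> y \<in> I \<Longrightarrow> x + y \<in> I"
  by (simp add: is_ideal_def)

lemma is_ideal_mult_left: "is_ideal I \<Longrightarrow> x \<in> I \<Longrightarrow> r * x \<in> I"
  by (simp add: is_ideal_def)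

lemma is_ideal_mult_right: "is_ideal I \<Longrightarrow> x \<in> I \<Longrightarrow> x * r \<in> I"
  by (metis is_ideal_mult_left mult.commute)

lemma is_ideal_uminus: "is_ideal I \<Longrightarrow> x \<in> I \<Longrightarrow> - x \<in> I"
  using is_ideal_mult_left[of I x "- 1"] by simp

lemma is_ideal_diff: "is_ideal I \<Longrightarrow> x \<in> I \<Longrightarrow> y \<in> I \<Longrightarrow> x - y \<in> I"
  by (metis diff_conv_add_uminus is_ideal_add is_ideal_uminus)

lemma is_ideal_sum: "is_ideal I \<Longrightarrow> (\<And>x. x \<in> S \<Longrightarrow> g x \<in> I) \<Longrightarrow> sum g S \<in> I"
  by (induction S rule: infinite_finite_induct) (auto simp: is_ideal_0 is_ideal_add)

lemma is_ideal_UNIV_iff: "is_ideal I \<Longrightarrow> I = UNIV \<longleftrightarrow> 1 \<in> I"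
  using is_ideal_mult_right[of I 1] by auto

lemma prime_ideal_is_ideal: "is_prime_ideal P \<Longrightarrow> is_ideal P"
  by (simp add: is_prime_ideal_def)

lemma prime_ideal_mult: "is_prime_ideal P \<Longrightarrow> x * y \<in> P \<Longrightarrow> x \<in> P \<or> y \<in> P"
  by (simp add: is_prime_ideal_def)

lemma prime_ideal_one_notin: "is_prime_ideal P \<Longrightarrow> 1 \<notin> P"
  using is_ideal_UNIV_iff by (auto simp: is_prime_ideal_def)

lemma prime_ideal_prod_notin:
  "is_prime_ideal P \<Longrightarrow> (\<And>i. i \<in> S \<Longrightarrow> f i \<notin> P) \<Longrightarrow> prod f S \<notin> P"
  by (induction S rule: infinite_finite_induct) (auto simp: prime_ideal_one_notin dest: prime_ideal_mult)

lemma zero_is_prime_ideal: "is_prime_ideal {0 :: 'a :: idom}"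
proof -
  have "(1::'a) \<notin> {0}"
    by simp
  then have "{0::'a} \<noteq> UNIV"
    by blast
  then show ?thesis
    unfolding is_prime_ideal_def is_ideal_def by auto
qed

lemma gen_ideal_subset: "is_ideal I \<Longrightarrow> F \<subseteq> I \<Longrightarrow> gen_ideal F \<subseteq> I"
  unfolding gen_ideal_def by (auto intro!: is_ideal_sum is_ideal_mult_left)

lemma gen_ideal_superset: "finite F \<Longrightarrow> F \<subseteq> gen_ideal F"
proof
  fix x assume "finite F" "x \<in> F"
  have "(\<Sum>f\<in>F. (if f = x then 1 else 0) * f) = (\<Sum>f\<in>F. if f = x then f else 0)"
    by (rule sum.cong) auto
  then have "x = (\<Sum>f\<in>F. (if f = x then 1 else 0) * f)"
    using \<open>finite F\<close> \<open>x \<in> F\<close> by simp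
  then show "x \<in> gen_ideal F"
    unfolding gen_ideal_def mem_Collect_eq by (rule exI[where x="\<lambda>f. if f = x then 1 else 0"])
qed

lemma noetherian_finite_generators:
  assumes "noetherian TYPE('a::comm_ring_1)" "is_ideal (I :: 'a set)"
  obtains F where "finite F" "F \<subseteq> I" "I = gen_ideal F"
  using assms gen_ideal_superset unfolding noetherian_def by blast

lemma is_ideal_Union_chain:
  assumes ideal: "\<And>n. is_ideal (C n)" and mono: "\<And>n. C n \<subseteq> C (Suc n)"
  shows "is_ideal (\<Union>n. C n)"
  unfolding is_ideal_def
proof (intro conjI ballI allI)
  show "0 \<in> (\<Union>n. C n)"
    using is_ideal_0[OF ideal] by blast
next
  fix x y assume "x \<in> (\<Union>n. C n)" "y \<in> (\<Union>n. C n)"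
  then obtain m n where "x \<in> C m" "y \<in> C n"
    by blast
  then have "x \<in> C (max m n)" "y \<in> C (max m n)"
    using lift_Suc_mono_le[of C, OF mono, of m "max m n"] lift_Suc_mono_le[of C, OF mono, of n "max m n"]
    by auto
  then show "x + y \<in> (\<Union>n. C n)"
    using is_ideal_add[OF ideal] by blast
next
  fix r x assume "x \<in> (\<Union>n. C n)"
  then show "r * x \<in> (\<Union>n. C n)"
    using is_ideal_mult_left[OF ideal] by blast
qed

lemma noetherian_ascending_chain:
  fixes C :: "nat \<Rightarrow> 'a::comm_ring_1 set"
  assumes N: "noetherian TYPE('a)" and ideal: "\<And>n. is_ideal (C n)" and mono: "\<And>n. C n \<subseteq> C (Suc n)"
  shows "\<exists>m. C (Suc m) = C m"
proof -
  obtain F where F: "finite F" "F \<subseteq> (\<Union>n. C n)" "(\<Union>n. C n) = gen_ideal F"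
    using noetherian_finite_generators[OF N is_ideal_Union_chain[of C, OF ideal mono]] by blast
  have "\<exists>m. F \<subseteq> C m"
    using F(1,2)
  proof (induction F rule: finite_induct)
    case (insert x F)
    then obtain m k where "F \<subseteq> C m" "x \<in> C k"
      by blast
    then have "insert x F \<subseteq> C (max m k)"
      using lift_Suc_mono_le[of C, OF mono, of m "max m k"] lift_Suc_mono_le[of C, OF mono, of k "max m k"]
      by auto
    then show ?case ..
  qed simp
  then obtain m where "F \<subseteq> C m" ..
  then have "C (Suc m) \<subseteq> C m"
    using F(3) gen_ideal_subset[OF ideal[of m]] by blast
  then show ?thesis
    using mono[of m] by blast
qed

lemma noetherian_has_maximal:
  fixes S :: "'a::comm_ring_1 set set"
  assumes N: "noetherian TYPE('a)" and "S \<noteq> {}" and S: "\<forall>I\<in>S. is_ideal I"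
  shows "\<exists>I\<in>S. \<forall>J\<in>S. I \<subseteq> J \<longrightarrow> J = I"
proof (rule ccontr)
  assume "\<not> ?thesis"
  then have "\<forall>I\<in>S. \<exists>J\<in>S. I \<subset> J"
    by blast
  then obtain f where f: "\<And>I. I \<in> S \<Longrightarrow> f I \<in> S \<and> I \<subset> f I"
    by metis
  from \<open>S \<noteq> {}\<close> obtain I0 where I0: "I0 \<in> S"
    by blast
  define C where "C n = (f ^^ n) I0" for n
  have CS: "C n \<in> S" for n
  proof (induction n)
    case (Suc n)
    then show ?case
      using f[of "C n"] by (simp add: C_def)
  qed (simp add: C_def I0)
  have strict: "C n \<subset> C (Suc n)" for n
    using f[OF CS[of n]] by (simp add: C_def)
  have "\<exists>m. C (Suc m) = C m"
    by (rule noetherian_ascending_chain[OF N]) (use S CS strict in blast)+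
  then show False
    using strict by (metis less_irrefl)
qed

definition principal_ideal :: "'a::comm_ring_1 \<Rightarrow> 'a set" where
  "principal_ideal y = {x. y dvd x}"

lemma mem_principal_ideal [simp]: "x \<in> principal_ideal y \<longleftrightarrow> y dvd x"
  by (simp add: principal_ideal_def)

lemma is_ideal_principal_ideal: "is_ideal (principal_ideal y)"
  by (auto simp: is_ideal_def intro: dvd_add dvd_mult)

lemma principal_ideal_subset: "is_ideal I \<Longrightarrow> y \<in> I \<Longrightarrow> principal_ideal y \<subseteq> I"
  by (auto elim!: dvdE intro: is_ideal_mult_right)

definition ideal_adjoin :: "'a::comm_ring_1 set \<Rightarrow> 'a \<Rightarrow> 'a set" where
  "ideal_adjoin J x = {j + r * x | j r. j \<in> J}"

lemma ideal_adjoinI: "j \<in> J \<Longrightarrow> j + r * x \<in> ideal_adjoin J x"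
  unfolding ideal_adjoin_def by blast

lemma ideal_adjoinE:
  assumes "a \<in> ideal_adjoin J x"
  obtains j r where "j \<in> J" "a = j + r * x"
  using assms unfolding ideal_adjoin_def by blast

lemma is_ideal_ideal_adjoin:
  assumes J: "is_ideal J"
  shows "is_ideal (ideal_adjoin J x)"
  unfolding is_ideal_def
proof (intro conjI ballI allI)
  show "0 \<in> ideal_adjoin J x"
    using ideal_adjoinI[OF is_ideal_0[OF J], of 0 x] by simp
next
  fix a b assume "a \<in> ideal_adjoin J x" "b \<in> ideal_adjoin J x"
  then obtain j1 r1 j2 r2 where "j1 \<in> J" "a = j1 + r1 * x" "j2 \<in> J" "b = j2 + r2 * x"
    by (elim ideal_adjoinE)
  then have "a + b = (j1 + j2) + (r1 + r2) * x" "j1 + j2 \<in> J"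
    using is_ideal_add[OF J] by (simp_all add: algebra_simps)
  then show "a + b \<in> ideal_adjoin J x"
    using ideal_adjoinI by metis
next
  fix c a assume "a \<in> ideal_adjoin J x"
  then obtain j r where "j \<in> J" "a = j + r * x"
    by (rule ideal_adjoinE)
  then have "c * a = c * j + (c * r) * x" "c * j \<in> J"
    using is_ideal_mult_left[OF J, of j c] by (simp_all add: algebra_simps)
  then show "c * a \<in> ideal_adjoin J x"
    using ideal_adjoinI by metis
qed

lemma ideal_adjoin_superset: "J \<subseteq> ideal_adjoin J x"
  using ideal_adjoinI[of _ J 0 x] by auto

lemma ideal_adjoin_mem: "is_ideal J \<Longrightarrow> x \<in> ideal_adjoin J x"
  using ideal_adjoinI[OF is_ideal_0, of J 1 x] by simp

lemma ideal_adjoin_mono: "J \<subseteq> J' \<Longrightarrow> ideal_adjoin J x \<subseteq> ideal_adjoin J' x"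
  unfolding ideal_adjoin_def by blast

lemma ideal_adjoin_mult:
  assumes J: "is_ideal J" and xy: "x * y \<in> J" and "a \<in> ideal_adjoin J x" "b \<in> ideal_adjoin J y"
  shows "a * b \<in> J"
proof -
  obtain j1 r1 j2 r2 where j: "j1 \<in> J" "a = j1 + r1 * x" "j2 \<in> J" "b = j2 + r2 * y"
    using assms(3,4) by (elim ideal_adjoinE)
  have "a * b = j1 * b + ((r1 * x) * j2 + (r1 * r2) * (x * y))"
    by (simp add: j algebra_simps)
  moreover have "j1 * b \<in> J" "(r1 * x) * j2 \<in> J" "(r1 * r2) * (x * y) \<in> J"
    using j xy is_ideal_mult_left[OF J] is_ideal_mult_right[OF J] by auto
  ultimately show ?thesis
    by (simp add: is_ideal_add[OF J])
qed

section \<open>Minimal primes\<close>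

text \<open>The product ideal \<open>Ps 0 \<cdots> Ps (n - 1)\<close> is expressed through its generators.\<close>
definition prime_product_cover :: "'a::comm_ring_1 set \<Rightarrow> nat \<Rightarrow> (nat \<Rightarrow> 'a set) \<Rightarrow> bool" where
  "prime_product_cover J n Ps \<longleftrightarrow> (\<forall>i<n. is_prime_ideal (Ps i) \<and> J \<subseteq> Ps i) \<and>
     (\<forall>q. (\<forall>i<n. q i \<in> Ps i) \<longrightarrow> (\<Prod>i<n. q i) \<in> J)"

lemma prime_product_cover_append:
  assumes I: "is_ideal I" and xy: "x * y \<in> I"
    and Px: "prime_product_cover (ideal_adjoin I x) m Ps"
    and Py: "prime_product_cover (ideal_adjoin I y) n Qs"
  shows "prime_product_cover I (m + n) (\<lambda>i. if i < m then Ps i else Qs (i - m))"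
  unfolding prime_product_cover_def
proof (intro conjI allI impI)
  fix i assume i: "i < m + n"
  have "is_prime_ideal (Ps i) \<and> I \<subseteq> Ps i" if "i < m"
    using Px that ideal_adjoin_superset[of I x] unfolding prime_product_cover_def by blast
  moreover have "is_prime_ideal (Qs (i - m)) \<and> I \<subseteq> Qs (i - m)" if "\<not> i < m"
  proof -
    have "i - m < n"
      using i that by linarith
    then show ?thesis
      using Py ideal_adjoin_superset[of I y] unfolding prime_product_cover_def by blast
  qed
  ultimately show "is_prime_ideal (if i < m then Ps i else Qs (i - m))"
    and "I \<subseteq> (if i < m then Ps i else Qs (i - m))"
    by auto
next
  fix q assume q: "\<forall>i<m + n. q i \<in> (if i < m then Ps i else Qs (i - m))"
  have "\<forall>i<m. q i \<in> Ps i"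
  proof (intro allI impI)
    fix i assume "i < m"
    then show "q i \<in> Ps i"
      using q[rule_format, of i] by simp
  qed
  then have "(\<Prod>i<m. q i) \<in> ideal_adjoin I x"
    using Px unfolding prime_product_cover_def by blast
  moreover have "\<forall>i<n. q (m + i) \<in> Qs i"
  proof (intro allI impI)
    fix i assume "i < n"
    then show "q (m + i) \<in> Qs i"
      using q[rule_format, of "m + i"] by simp
  qed
  then have "(\<Prod>i<n. q (m + i)) \<in> ideal_adjoin I y"
    using Py[unfolded prime_product_cover_def, THEN conjunct2, rule_format, of "\<lambda>i. q (m + i)"]
    by simp
  moreover have "(\<Prod>i<m + n. q i) = (\<Prod>i<m. q i) * (\<Prod>i<n. q (m + i))"
    by (induction n) (simp_all add: mult.assoc)
  ultimately show "(\<Prod>i<m + n. q i) \<in> I"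
    using ideal_adjoin_mult[OF I xy] by simp
qed

lemma noetherian_prime_product_cover:
  fixes J :: "'a::comm_ring_1 set"
  assumes N: "noetherian TYPE('a)" and J: "is_ideal J"
  shows "\<exists>n Ps. prime_product_cover J n Ps"
proof (rule ccontr)
  assume no_cover_J: "\<not> ?thesis"
  define S where "S = {I :: 'a set. is_ideal I \<and> \<not> (\<exists>n Ps. prime_product_cover I n Ps)}"
  obtain I where "I \<in> S" and I_max: "\<forall>I'\<in>S. I \<subseteq> I' \<longrightarrow> I' = I"
    using noetherian_has_maximal[OF N, of S] J no_cover_J unfolding S_def by blast
  then have I: "is_ideal I" and no_cover: "\<And>n Ps. \<not> prime_product_cover I n Ps"
    unfolding S_def by auto
  have "\<not> prime_product_cover I 0 (\<lambda>_. I)" "\<not> prime_product_cover I 1 (\<lambda>_. I)"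
    using no_cover by blast+
  then have "I \<noteq> UNIV" "\<not> is_prime_ideal I"
    unfolding prime_product_cover_def by auto
  then obtain x y where xy: "x * y \<in> I" "x \<notin> I" "y \<notin> I"
    using I unfolding is_prime_ideal_def by blast
  have cover: "\<exists>n Ps. prime_product_cover (ideal_adjoin I z) n Ps" if "z \<notin> I" for z
  proof (rule ccontr)
    assume "\<not> ?thesis"
    then have "ideal_adjoin I z \<in> S"
      unfolding S_def using is_ideal_ideal_adjoin[OF I] by blast
    then have "ideal_adjoin I z = I"
      using I_max ideal_adjoin_superset by blast
    then show False
      using ideal_adjoin_mem[OF I, of z] that by simp
  qed
  obtain m Ps n Qs where "prime_product_cover (ideal_adjoin I x) m Ps"
      "prime_product_cover (ideal_adjoin I y) n Qs"
    using cover xy(2,3) by blast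
  then show False
    using prime_product_cover_append[OF I xy(1)] no_cover by blast
qed

lemma prime_product_cover_subset:
  assumes "prime_product_cover J n Ps" "is_prime_ideal P" "J \<subseteq> P"
  shows "\<exists>i<n. Ps i \<subseteq> P"
proof (rule ccontr)
  assume "\<not> ?thesis"
  then have "\<forall>i<n. \<exists>x. x \<in> Ps i \<and> x \<notin> P"
    by blast
  then obtain q where q: "\<And>i. i < n \<Longrightarrow> q i \<in> Ps i \<and> q i \<notin> P"
    by metis
  then have "(\<Prod>i<n. q i) \<in> P"
    using assms(1,3) unfolding prime_product_cover_def by blast
  moreover have "(\<Prod>i<n. q i) \<notin> P"
    using prime_ideal_prod_notin[OF assms(2), of "{..<n}" q] q by blast
  ultimately show False
    by contradiction
qed

definition minimal_prime_over :: "'a::comm_ring_1 set \<Rightarrow> 'a set \<Rightarrow> bool" where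
  "minimal_prime_over J P \<longleftrightarrow> is_prime_ideal P \<and> J \<subseteq> P \<and>
     (\<forall>P'. is_prime_ideal P' \<and> J \<subseteq> P' \<and> P' \<subseteq> P \<longrightarrow> P' = P)"

lemma minimal_prime_over_in_cover:
  assumes "prime_product_cover J n Ps" "minimal_prime_over J P"
  shows "\<exists>i<n. P = Ps i"
proof -
  have P: "is_prime_ideal P" "J \<subseteq> P"
    using assms(2) unfolding minimal_prime_over_def by auto
  obtain i where "i < n" "Ps i \<subseteq> P"
    using prime_product_cover_subset[OF assms(1) P] by blast
  moreover from \<open>i < n\<close> have "is_prime_ideal (Ps i)" "J \<subseteq> Ps i"
    using assms(1) unfolding prime_product_cover_def by auto
  ultimately have "Ps i = P"
    using assms(2) unfolding minimal_prime_over_def by blast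
  with \<open>i < n\<close> show ?thesis
    by blast
qed

lemma finite_minimal_primes_over:
  fixes J :: "'a::comm_ring_1 set"
  assumes "noetherian TYPE('a)" "is_ideal J"
  shows "finite {P. minimal_prime_over J P}"
proof -
  obtain n Ps where cover: "prime_product_cover J n Ps"
    using noetherian_prime_product_cover[OF assms] by blast
  have "{P. minimal_prime_over J P} \<subseteq> Ps ` {..<n}"
    using minimal_prime_over_in_cover[OF cover] by blast
  then show ?thesis
    by (rule finite_subset) simp
qed

lemma minimal_prime_over_exists:
  fixes J :: "'a::comm_ring_1 set"
  assumes N: "noetherian TYPE('a)" and J: "is_ideal J" and P: "is_prime_ideal P" "J \<subseteq> P"
  shows "\<exists>P'. minimal_prime_over J P' \<and> P' \<subseteq> P"
proof -
  obtain n Ps where cover: "prime_product_cover J n Ps"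
    using noetherian_prime_product_cover[OF N J] by blast
  define F where "F = {Ps i | i. i < n \<and> Ps i \<subseteq> P}"
  have "finite F"
    unfolding F_def by simp
  moreover have "F \<noteq> {}"
    using prime_product_cover_subset[OF cover P] unfolding F_def by blast
  ultimately obtain B where "B \<in> F" and "\<forall>X\<in>F. X \<le> B \<longrightarrow> B = X"
    using finite_has_minimal[of F] by blast
  then have B_min: "\<And>X. X \<in> F \<Longrightarrow> X \<subseteq> B \<Longrightarrow> X = B"
    by auto
  from \<open>B \<in> F\<close> obtain i where i: "i < n" "B = Ps i" "B \<subseteq> P"
    unfolding F_def by blast
  have "minimal_prime_over J B"
    unfolding minimal_prime_over_def
  proof (intro conjI allI impI)
    show "is_prime_ideal B" "J \<subseteq> B"
      using cover i unfolding prime_product_cover_def by auto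
  next
    fix P' assume P': "is_prime_ideal P' \<and> J \<subseteq> P' \<and> P' \<subseteq> B"
    then obtain l where "l < n" "Ps l \<subseteq> P'"
      using prime_product_cover_subset[OF cover] by blast
    then have "Ps l = B"
      using B_min[of "Ps l"] P' i unfolding F_def by blast
    then show "P' = B"
      using \<open>Ps l \<subseteq> P'\<close> P' by blast
  qed
  then show ?thesis
    using i by blast
qed

lemma prime_ideal_exists:
  fixes J :: "'a::comm_ring_1 set"
  assumes "noetherian TYPE('a)" "is_ideal J" "1 \<notin> J"
  shows "\<exists>P. is_prime_ideal P \<and> J \<subseteq> P"
proof -
  obtain n Ps where cover: "prime_product_cover J n Ps"
    using noetherian_prime_product_cover[OF assms(1,2)] by blast
  have "n \<noteq> 0"
  proof
    assume "n = 0"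
    then have "1 \<in> J"
      using cover unfolding prime_product_cover_def by simp
    with assms(3) show False ..
  qed
  then have "is_prime_ideal (Ps 0) \<and> J \<subseteq> Ps 0"
    using cover unfolding prime_product_cover_def by simp
  then show ?thesis ..
qed

section \<open>Localisation at a prime\<close>

text \<open>\<open>saturation Q I\<close> is the contraction to \<open>R\<close> of the extension of \<open>I\<close> to the localisation
  \<open>R\<^sub>Q\<close>.\<close>
definition saturation :: "'a::comm_ring_1 set \<Rightarrow> 'a set \<Rightarrow> 'a set" where
  "saturation Q I = {r. \<exists>u. u \<notin> Q \<and> u * r \<in> I}"

lemma saturationI: "u \<notin> Q \<Longrightarrow> u * r \<in> I \<Longrightarrow> r \<in> saturation Q I"
  unfolding saturation_def by blast

lemma saturationE:
  assumes "r \<in> saturation Q I"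
  obtains u where "u \<notin> Q" "u * r \<in> I"
  using assms unfolding saturation_def by blast

lemma is_ideal_saturation:
  assumes Q: "is_prime_ideal Q" and I: "is_ideal I"
  shows "is_ideal (saturation Q I)"
  unfolding is_ideal_def
proof (intro conjI ballI allI)
  show "0 \<in> saturation Q I"
    using is_ideal_0[OF I] prime_ideal_one_notin[OF Q] by (intro saturationI[of 1]) auto
next
  fix a b assume "a \<in> saturation Q I" "b \<in> saturation Q I"
  then obtain u v where uv: "u \<notin> Q" "u * a \<in> I" "v \<notin> Q" "v * b \<in> I"
    by (elim saturationE)
  have "(u * v) * (a + b) = v * (u * a) + u * (v * b)"
    by (simp add: algebra_simps)
  also have "\<dots> \<in> I"
    using uv by (simp add: is_ideal_add[OF I] is_ideal_mult_left[OF I])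
  finally show "a + b \<in> saturation Q I"
    using uv Q prime_ideal_mult by (blast intro: saturationI)
next
  fix c a assume "a \<in> saturation Q I"
  then obtain u where u: "u \<notin> Q" "u * a \<in> I"
    by (rule saturationE)
  have "u * (c * a) = c * (u * a)"
    by (simp add: algebra_simps)
  also have "\<dots> \<in> I"
    using u by (simp add: is_ideal_mult_left[OF I])
  finally show "c * a \<in> saturation Q I"
    using u(1) by (rule saturationI[rotated])
qed

lemma saturation_superset: "is_prime_ideal Q \<Longrightarrow> I \<subseteq> saturation Q I"
  using saturationI[of 1 Q _ I] prime_ideal_one_notin by auto

lemma saturation_mono: "I \<subseteq> J \<Longrightarrow> saturation Q I \<subseteq> saturation Q J"
  unfolding saturation_def by blast

lemma saturation_cancel:
  assumes Q: "is_prime_ideal Q" and "v \<notin> Q" "v * r \<in> saturation Q I"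
  shows "r \<in> saturation Q I"
proof -
  obtain u where "u \<notin> Q" "u * (v * r) \<in> I"
    using assms(3) by (rule saturationE)
  moreover have "u * v \<notin> Q"
    using \<open>u \<notin> Q\<close> \<open>v \<notin> Q\<close> Q prime_ideal_mult by blast
  ultimately show ?thesis
    by (metis saturationI mult.assoc)
qed

lemma saturation_saturation: "is_prime_ideal Q \<Longrightarrow> saturation Q (saturation Q I) \<subseteq> saturation Q I"
  by (metis saturationE saturation_cancel subsetI)

definition saturated :: "'a::comm_ring_1 set \<Rightarrow> 'a set \<Rightarrow> bool" where
  "saturated Q I \<longleftrightarrow> is_ideal I \<and> saturation Q I \<subseteq> I"

lemma saturated_saturation: "is_prime_ideal Q \<Longrightarrow> is_ideal I \<Longrightarrow> saturated Q (saturation Q I)"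
  by (simp add: saturated_def is_ideal_saturation saturation_saturation)

lemma saturated_subset_prime:
  assumes "saturated Q I" "1 \<notin> I"
  shows "I \<subseteq> Q"
proof
  fix r assume "r \<in> I"
  show "r \<in> Q"
  proof (rule ccontr)
    assume "r \<notin> Q"
    then have "1 \<in> saturation Q I"
      using \<open>r \<in> I\<close> by (intro saturationI[of r]) auto
    then show False
      using assms unfolding saturated_def by blast
  qed
qed

text \<open>\<open>artinian_at Q I\<close> says that \<open>R\<^sub>Q / I R\<^sub>Q\<close> is an Artinian ring: its ideals correspond to the
  saturated ideals of \<open>R\<close> containing \<open>I\<close>.\<close>
definition artinian_at :: "'a::comm_ring_1 set \<Rightarrow> 'a set \<Rightarrow> bool" where
  "artinian_at Q I \<longleftrightarrow> (\<forall>L. (\<forall>n. saturated Q (L n) \<and> I \<subseteq> L n \<and> L (Suc n) \<subseteq> L n)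
      \<longrightarrow> (\<exists>n0. \<forall>n\<ge>n0. L n = L n0))"

lemma artinian_at_UNIV: "artinian_at Q UNIV"
  unfolding artinian_at_def by auto

lemma artinian_at_saturation:
  assumes "artinian_at Q (saturation Q J)"
  shows "artinian_at Q J"
  unfolding artinian_at_def
proof (intro allI impI)
  fix L assume L: "\<forall>n. saturated Q (L n) \<and> J \<subseteq> L n \<and> L (Suc n) \<subseteq> L n"
  then have "saturation Q J \<subseteq> L n" for n
    using saturation_mono[of J "L n" Q] unfolding saturated_def by blast
  with L show "\<exists>n0. \<forall>n\<ge>n0. L n = L n0"
    using assms unfolding artinian_at_def by blast
qed

lemma descending_chain_membership_stable:
  fixes L :: "nat \<Rightarrow> 'a set"
  assumes "\<And>n. L (Suc n) \<subseteq> L n"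
  shows "\<exists>n0. \<forall>n\<ge>n0. z \<in> L n \<longrightarrow> z \<in> L (Suc n)"
proof (cases "\<forall>n. z \<in> L n")
  case False
  then obtain n0 where "z \<notin> L n0"
    by blast
  then have "\<forall>n\<ge>n0. z \<notin> L n"
    using lift_Suc_antimono_le[of L, OF assms] by blast
  then show ?thesis
    by blast
qed blast

text \<open>Modulo \<open>I\<close>, the element \<open>z\<close> spans a copy of the residue field \<open>R\<^sub>Q / Q R\<^sub>Q\<close>; this is why
  adjoining \<open>z\<close> distinguishes saturated ideals over \<open>I\<close> up to the single bit \<open>z \<in> L\<close>.\<close>
lemma saturated_eq_if_adjoin_eq:
  assumes Q: "is_prime_ideal Q" and L1: "saturated Q L1" and L2: "saturated Q L2"
    and "I \<subseteq> L2" "L2 \<subseteq> L1" and zQ: "\<forall>q\<in>Q. z * q \<in> I"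
    and adjoin_eq: "saturation Q (ideal_adjoin L1 z) = saturation Q (ideal_adjoin L2 z)"
    and z: "z \<in> L1 \<Longrightarrow> z \<in> L2"
  shows "L1 = L2"
proof
  show "L1 \<subseteq> L2"
  proof
    fix w assume "w \<in> L1"
    then have "w \<in> saturation Q (ideal_adjoin L2 z)"
      using ideal_adjoin_superset[of L1 z] saturation_superset[OF Q, of "ideal_adjoin L1 z"] adjoin_eq
      by blast
    then obtain u where "u \<notin> Q" "u * w \<in> ideal_adjoin L2 z"
      by (rule saturationE)
    then obtain l r where l: "l \<in> L2" and uw: "u * w = l + r * z"
      by (elim ideal_adjoinE)
    have L1_ideal: "is_ideal L1" and L2_ideal: "is_ideal L2"
      using L1 L2 unfolding saturated_def by auto
    have "r * z \<in> L2"
    proof (cases "r \<in> Q")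
      case True
      then show ?thesis
        using zQ \<open>I \<subseteq> L2\<close> by (auto simp: mult.commute)
    next
      case False
      have "r * z = u * w - l"
        using uw by simp
      also have "\<dots> \<in> L1"
        using \<open>w \<in> L1\<close> l \<open>L2 \<subseteq> L1\<close> is_ideal_diff[OF L1_ideal] is_ideal_mult_left[OF L1_ideal] by blast
      finally have "z \<in> L1"
        using False L1 unfolding saturated_def by (blast intro: saturationI)
      then show ?thesis
        using z is_ideal_mult_left[OF L2_ideal] by blast
    qed
    then have "u * w \<in> L2"
      using uw l is_ideal_add[OF L2_ideal] by simp
    then show "w \<in> L2"
      using \<open>u \<notin> Q\<close> L2 unfolding saturated_def by (blast intro: saturationI)
  qed
qed fact

lemma artinian_at_extension:
  assumes Q: "is_prime_ideal Q" and zQ: "\<forall>q\<in>Q. z * q \<in> I"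
    and art: "artinian_at Q (saturation Q (ideal_adjoin I z))"
  shows "artinian_at Q I"
  unfolding artinian_at_def
proof (intro allI impI)
  fix L assume L: "\<forall>n. saturated Q (L n) \<and> I \<subseteq> L n \<and> L (Suc n) \<subseteq> L n"
  define L' where "L' n = saturation Q (ideal_adjoin (L n) z)" for n
  have "saturated Q (L' n) \<and> saturation Q (ideal_adjoin I z) \<subseteq> L' n \<and> L' (Suc n) \<subseteq> L' n" for n
  proof -
    have "is_ideal (L n)" "I \<subseteq> L n" "L (Suc n) \<subseteq> L n"
      using L unfolding saturated_def by auto
    then show ?thesis
      unfolding L'_def
      by (simp add: saturated_saturation[OF Q] is_ideal_ideal_adjoin saturation_mono ideal_adjoin_mono)
  qed
  then obtain n1 where n1: "\<forall>n\<ge>n1. L' n = L' n1"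
    using art[unfolded artinian_at_def, rule_format, of L'] by blast
  obtain n2 where n2: "\<forall>n\<ge>n2. z \<in> L n \<longrightarrow> z \<in> L (Suc n)"
    using descending_chain_membership_stable[of L z] L by blast
  have stable: "L (Suc n) = L n" if "max n1 n2 \<le> n" for n
  proof (rule sym, rule saturated_eq_if_adjoin_eq[OF Q _ _ _ _ zQ])
    have "L' n = L' n1" "L' (Suc n) = L' n1"
      using n1[rule_format, of n] n1[rule_format, of "Suc n"] that by simp_all
    then show "saturation Q (ideal_adjoin (L n) z) = saturation Q (ideal_adjoin (L (Suc n)) z)"
      unfolding L'_def by simp
    show "z \<in> L n \<Longrightarrow> z \<in> L (Suc n)"
      using n2[rule_format, of n] that by simp
  qed (use L in blast)+
  have "L n = L (max n1 n2)" if "max n1 n2 \<le> n" for n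
    using that
  proof (induction n rule: dec_induct)
    case (step m)
    then show ?case
      using stable[of m] by simp
  qed simp
  then show "\<exists>n0. \<forall>n\<ge>n0. L n = L n0"
    by blast
qed

lemma annihilator_or_nonvanishing_product:
  fixes I Q :: "'a::comm_ring_1 set"
  assumes "s \<notin> I"
  shows "(\<exists>z. z \<notin> I \<and> (\<forall>q\<in>Q. z * q \<in> I)) \<or>
    (\<exists>q::nat \<Rightarrow> 'a. (\<forall>i<M. q i \<in> Q) \<and> s * (\<Prod>i<M. q i) \<notin> I)"
proof (induction M)
  case 0
  then show ?case
    using assms by simp
next
  case (Suc M)
  then show ?case
  proof
    assume "\<exists>q. (\<forall>i<M. q i \<in> Q) \<and> s * (\<Prod>i<M. q i) \<notin> I"
    then obtain q where q: "\<forall>i<M. q i \<in> Q" "s * (\<Prod>i<M. q i) \<notin> I"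
      by blast
    show ?case
    proof (cases "\<forall>q'\<in>Q. (s * (\<Prod>i<M. q i)) * q' \<in> I")
      case True
      then show ?thesis
        using q(2) by blast
    next
      case False
      then obtain q' where q': "q' \<in> Q" "(s * (\<Prod>i<M. q i)) * q' \<notin> I"
        by blast
      have "(\<Prod>i<M. (q(M := q')) i) = (\<Prod>i<M. q i)"
        by (rule prod.cong) auto
      then have "s * (\<Prod>i<Suc M. (q(M := q')) i) = (s * (\<Prod>i<M. q i)) * q'"
        by (simp add: mult.assoc)
      moreover have "\<forall>i<Suc M. (q(M := q')) i \<in> Q"
        using q(1) q'(1) by (simp add: less_Suc_eq)
      ultimately show ?thesis
        using q'(2) by metis
    qed
  qed simp
qed

text \<open>Noetherian induction on the saturated ideals over \<open>J\<close>: a maximal non-Artinian one \<open>I\<close> is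
  contained in \<open>Q\<close>, and the hypothesis yields \<open>z \<notin> I\<close> with \<open>z Q \<subseteq> I\<close>; adjoining \<open>z\<close> makes the
  quotient Artinian by maximality, and \<open>artinian_at_extension\<close> passes this back down to \<open>I\<close>.\<close>
lemma artinian_at_if_localized_power:
  fixes J Q :: "'a::comm_ring_1 set" and M :: nat
  assumes N: "noetherian TYPE('a)" and Q: "is_prime_ideal Q" and J: "is_ideal J"
    and s: "s \<notin> Q" and power: "\<forall>q. (\<forall>i<M. q i \<in> Q) \<longrightarrow> s * (\<Prod>i<M. q i) \<in> J"
  shows "artinian_at Q J"
proof (rule ccontr)
  assume "\<not> artinian_at Q J"
  define S where "S = {I. saturated Q I \<and> J \<subseteq> I \<and> \<not> artinian_at Q I}"
  have "saturation Q J \<in> S"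
    unfolding S_def
    using saturated_saturation[OF Q J] saturation_superset[OF Q] artinian_at_saturation
      \<open>\<not> artinian_at Q J\<close> by blast
  then obtain I where "I \<in> S" and I_max: "\<forall>I'\<in>S. I \<subseteq> I' \<longrightarrow> I' = I"
    using noetherian_has_maximal[OF N, of S] unfolding S_def saturated_def by blast
  then have I: "saturated Q I" "J \<subseteq> I" "\<not> artinian_at Q I"
    unfolding S_def by auto
  have "I \<noteq> UNIV"
    using I(3) artinian_at_UNIV by blast
  then have "1 \<notin> I"
    using I(1) is_ideal_UNIV_iff unfolding saturated_def by blast
  then have "s \<notin> I"
    using saturated_subset_prime[OF I(1)] s by blast
  moreover have "\<not> (\<exists>q. (\<forall>i<M. q i \<in> Q) \<and> s * (\<Prod>i<M. q i) \<notin> I)"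
    using power I(2) by blast
  ultimately obtain z where z: "z \<notin> I" "\<forall>q\<in>Q. z * q \<in> I"
    using annihilator_or_nonvanishing_product[where M=M and Q=Q] by blast
  define Z where "Z = saturation Q (ideal_adjoin I z)"
  have I_ideal: "is_ideal I"
    using I(1) unfolding saturated_def by blast
  have "saturated Q Z"
    unfolding Z_def by (intro saturated_saturation[OF Q] is_ideal_ideal_adjoin I_ideal)
  moreover have "I \<subseteq> Z" "z \<in> Z"
    using ideal_adjoin_superset[of I z] ideal_adjoin_mem[OF I_ideal, of z]
      saturation_superset[OF Q, of "ideal_adjoin I z"]
    unfolding Z_def by auto
  moreover have "Z \<noteq> I"
    using \<open>z \<in> Z\<close> z(1) by blast
  ultimately have "artinian_at Q Z"
    using I_max I(2) unfolding S_def by blast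
  then show False
    using artinian_at_extension[OF Q z(2)] I(3) unfolding Z_def by blast
qed

lemma prod_mult_swap_subset:
  fixes n :: nat
  assumes "B \<subseteq> {..<n}"
  shows "(\<Prod>i\<in>B. t i) * (\<Prod>i<n. q i) = (\<Prod>i<n. if i \<in> B then t i else q i) * (\<Prod>i\<in>B. q i)"
proof -
  have "(\<Prod>i<n. if i \<in> B then t i else q i) = (\<Prod>i\<in>B. t i) * (\<Prod>i\<in>{..<n} - B. q i)"
    using prod.If_cases[of "{..<n}" "\<lambda>i. i \<in> B" t q] assms by (simp add: Int_absorb1 Diff_eq)
  moreover have "(\<Prod>i<n. q i) = (\<Prod>i\<in>{..<n} - B. q i) * (\<Prod>i\<in>B. q i)"
    using prod.subset_diff[OF assms] by simp
  ultimately show ?thesis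
    by (simp add: ac_simps)
qed

text \<open>Some power of \<open>Q\<close> lies in \<open>J\<close> after localising at \<open>Q\<close>: the primes of a cover of \<open>J\<close> that are
  contained in \<open>Q\<close> equal \<open>Q\<close>, and the others contribute a factor \<open>s \<notin> Q\<close>.\<close>
lemma minimal_prime_over_localized_power:
  fixes J Q :: "'a::comm_ring_1 set"
  assumes N: "noetherian TYPE('a)" and J: "is_ideal J" and Q: "minimal_prime_over J Q"
  shows "\<exists>s (M::nat). s \<notin> Q \<and> (\<forall>q. (\<forall>i<M. q i \<in> Q) \<longrightarrow> s * (\<Prod>i<M. q i) \<in> J)"
proof -
  obtain n Ps where cover: "prime_product_cover J n Ps"
    using noetherian_prime_product_cover[OF N J] by blast
  have Q_prime: "is_prime_ideal Q"
    using Q unfolding minimal_prime_over_def by blast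
  define B where "B = {i. i < n \<and> \<not> Ps i \<subseteq> Q}"
  have "\<forall>i\<in>B. \<exists>t. t \<in> Ps i \<and> t \<notin> Q"
    unfolding B_def by blast
  then obtain t where t: "\<And>i. i \<in> B \<Longrightarrow> t i \<in> Ps i \<and> t i \<notin> Q"
    by metis
  have Ps_eq: "Ps i = Q" if "i < n" "i \<notin> B" for i
  proof -
    have "is_prime_ideal (Ps i)" "J \<subseteq> Ps i"
      using cover that(1) unfolding prime_product_cover_def by auto
    moreover have "Ps i \<subseteq> Q"
      using that unfolding B_def by blast
    ultimately show ?thesis
      using Q unfolding minimal_prime_over_def by blast
  qed
  have B: "B \<subseteq> {..<n}"
    unfolding B_def by blast
  have "(\<Prod>i\<in>B. t i) \<notin> Q"
    by (rule prime_ideal_prod_notin[OF Q_prime]) (use t in blast)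
  moreover have "(\<Prod>i\<in>B. t i) * (\<Prod>i<n. q i) \<in> J" if q: "\<forall>i<n. q i \<in> Q" for q
  proof -
    define q' where "q' i = (if i \<in> B then t i else q i)" for i
    have "q' i \<in> Ps i" if "i < n" for i
      using t q that Ps_eq[OF that] unfolding q'_def by (cases "i \<in> B") simp_all
    then have "(\<Prod>i<n. q' i) \<in> J"
      using cover[unfolded prime_product_cover_def, THEN conjunct2, rule_format, of q'] by blast
    then show ?thesis
      unfolding prod_mult_swap_subset[OF B] q'_def[symmetric] by (rule is_ideal_mult_right[OF J])
  qed
  ultimately show ?thesis
    by blast
qed

lemma artinian_at_minimal_prime_over:
  fixes J Q :: "'a::comm_ring_1 set"
  assumes N: "noetherian TYPE('a)" and J: "is_ideal J" and Q: "minimal_prime_over J Q"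
  shows "artinian_at Q J"
proof -
  have Q_prime: "is_prime_ideal Q"
    using Q unfolding minimal_prime_over_def by blast
  obtain s and M :: nat where "s \<notin> Q" "\<forall>q. (\<forall>i<M. q i \<in> Q) \<longrightarrow> s * (\<Prod>i<M. q i) \<in> J"
    using minimal_prime_over_localized_power[OF N J Q] by blast
  then show ?thesis
    by (rule artinian_at_if_localized_power[OF N Q_prime J])
qed

section \<open>Krull's principal ideal theorem\<close>

definition ideal_quotient :: "'a::comm_ring_1 set \<Rightarrow> 'a \<Rightarrow> 'a set" where
  "ideal_quotient J d = {f. d * f \<in> J}"

lemma is_ideal_ideal_quotient:
  assumes J: "is_ideal J"
  shows "is_ideal (ideal_quotient J d)"
proof -
  have "d * (x + y) \<in> J" if "d * x \<in> J" "d * y \<in> J" for x y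
    using is_ideal_add[OF J that] by (simp add: distrib_left)
  moreover have "d * (r * x) \<in> J" if "d * x \<in> J" for r x
    using is_ideal_mult_left[OF J that, of r] by (simp add: mult.left_commute)
  ultimately show ?thesis
    using is_ideal_0[OF J] unfolding is_ideal_def ideal_quotient_def by auto
qed

lemma noetherian_ideal_quotient_powers_stable:
  fixes D :: "'a::comm_ring_1 set"
  assumes N: "noetherian TYPE('a)" and D: "is_ideal D"
  shows "\<exists>j. ideal_quotient D (y ^ Suc j) = ideal_quotient D (y ^ j)"
proof -
  have "is_ideal (ideal_quotient D (y ^ j))" for j
    by (rule is_ideal_ideal_quotient[OF D])
  moreover have "ideal_quotient D (y ^ j) \<subseteq> ideal_quotient D (y ^ Suc j)" for j
    unfolding ideal_quotient_def using is_ideal_mult_left[OF D, of _ y] by (auto simp: mult.assoc)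
  ultimately show ?thesis
    using noetherian_ascending_chain[OF N, of "\<lambda>j. ideal_quotient D (y ^ j)"] by blast
qed

lemma saturation_common_multiplier:
  fixes P J :: "'a::comm_ring_1 set"
  assumes N: "noetherian TYPE('a)" and P: "is_prime_ideal P" and J: "is_ideal J"
  obtains d where "d \<notin> P" "saturation P J \<subseteq> ideal_quotient J d"
proof -
  obtain F where F: "finite F" "F \<subseteq> saturation P J" "saturation P J = gen_ideal F"
    using noetherian_finite_generators[OF N is_ideal_saturation[OF P J]] by blast
  then have "\<forall>g\<in>F. \<exists>u. u \<notin> P \<and> u * g \<in> J"
    unfolding saturation_def by blast
  then obtain u where u: "\<And>g. g \<in> F \<Longrightarrow> u g \<notin> P \<and> u g * g \<in> J"
    by metis
  define d where "d = (\<Prod>g\<in>F. u g)"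
  have "d \<notin> P"
    unfolding d_def by (rule prime_ideal_prod_notin[OF P]) (use u in blast)
  moreover have "F \<subseteq> ideal_quotient J d"
  proof
    fix g assume "g \<in> F"
    have "d = u g * (\<Prod>g'\<in>F - {g}. u g')"
      unfolding d_def by (rule prod.remove[OF F(1) \<open>g \<in> F\<close>])
    then have "d * g = (\<Prod>g'\<in>F - {g}. u g') * (u g * g)"
      by (simp add: algebra_simps)
    then show "g \<in> ideal_quotient J d"
      unfolding ideal_quotient_def using u[OF \<open>g \<in> F\<close>] is_ideal_mult_left[OF J] by simp
  qed
  then have "saturation P J \<subseteq> ideal_quotient J d"
    using F(3) gen_ideal_subset[OF is_ideal_ideal_quotient[OF J]] by simp
  ultimately show ?thesis
    by (rule that)
qed

text \<open>Krull's intersection theorem for the Noetherian local domain \<open>(R/P)\<^sub>Q\<close>, in elementary form: the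
  image of \<open>d \<notin> P\<close> there is not divisible by every power of \<open>y \<in> Q\<close>.  The colon ideals
  \<open>(d) : y\<^sup>j\<close> of \<open>(R/P)\<^sub>Q\<close> stabilise, and stability turns divisibility of \<open>d\<close> by a high power of \<open>y\<close>
  into a relation \<open>d (v u - y c) = 0\<close> with a unit \<open>v u\<close>.\<close>
lemma not_divisible_by_all_powers:
  fixes P Q :: "'a::comm_ring_1 set"
  assumes N: "noetherian TYPE('a)" and P: "is_prime_ideal P" and Q: "is_prime_ideal Q"
    and "P \<subseteq> Q" "y \<in> Q" "d \<notin> P"
  shows "\<exists>j. \<forall>u r. u \<notin> Q \<longrightarrow> d * u - y ^ j * r \<notin> P"
proof (rule ccontr)
  assume "\<not> ?thesis"
  then have divisible: "\<exists>u r. u \<notin> Q \<and> d * u - y ^ j * r \<in> P" for j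
    by blast
  have P_ideal: "is_ideal P"
    using P by (rule prime_ideal_is_ideal)
  define D where "D = saturation Q (ideal_adjoin P d)"
  define C where "C j = ideal_quotient D (y ^ j)" for j
  have D_ideal: "is_ideal D"
    unfolding D_def by (intro is_ideal_saturation[OF Q] is_ideal_ideal_adjoin P_ideal)
  obtain j where C_eq: "C (Suc j) = C j"
    unfolding C_def using noetherian_ideal_quotient_powers_stable[OF N D_ideal] by blast
  obtain u r where u: "u \<notin> Q" and \<pi>: "d * u - y ^ Suc j * r \<in> P"
    using divisible by blast
  have "y ^ Suc j * r = - (d * u - y ^ Suc j * r) + u * d"
    by (simp add: algebra_simps)
  then have "y ^ Suc j * r \<in> ideal_adjoin P d"
    using ideal_adjoinI[OF is_ideal_uminus[OF P_ideal \<pi>], of u d] by simp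
  then have "r \<in> C (Suc j)"
    unfolding C_def ideal_quotient_def D_def using saturation_superset[OF Q] by blast
  then have "r \<in> C j"
    using C_eq by simp
  then obtain v where v: "v \<notin> Q" "v * (y ^ j * r) \<in> ideal_adjoin P d"
    unfolding C_def ideal_quotient_def D_def by (blast elim: saturationE)
  then obtain \<pi>' c where \<pi>': "\<pi>' \<in> P" "v * (y ^ j * r) = \<pi>' + c * d"
    by (elim ideal_adjoinE)
  have "d * (v * u - y * c) = v * (d * u - y ^ Suc j * r) + y * (v * (y ^ j * r) - c * d)"
    by (simp add: algebra_simps)
  also have "\<dots> = v * (d * u - y ^ Suc j * r) + y * \<pi>'"
    using \<pi>'(2) by simp
  also have "\<dots> \<in> P"
    using \<pi> \<pi>'(1) is_ideal_add[OF P_ideal] is_ideal_mult_left[OF P_ideal] by simp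
  finally have "v * u - y * c \<in> Q"
    using prime_ideal_mult[OF P] \<open>d \<notin> P\<close> \<open>P \<subseteq> Q\<close> by blast
  then have "v * u - y * c + y * c \<in> Q"
    using \<open>y \<in> Q\<close> is_ideal_add[OF prime_ideal_is_ideal[OF Q]]
      is_ideal_mult_right[OF prime_ideal_is_ideal[OF Q]] by blast
  then have "v * u \<in> Q"
    by simp
  then show False
    using prime_ideal_mult[OF Q] u v(1) by blast
qed

text \<open>The \<open>n\<close>-th symbolic power \<open>p\<^sup>n R\<^sub>P \<inter> R\<close> of the principal ideal \<open>(p)\<close>.\<close>
definition symbolic_power :: "'a::comm_ring_1 set \<Rightarrow> 'a \<Rightarrow> nat \<Rightarrow> 'a set" where
  "symbolic_power P p n = saturation P (principal_ideal (p ^ n))"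

lemma is_ideal_symbolic_power: "is_prime_ideal P \<Longrightarrow> is_ideal (symbolic_power P p n)"
  unfolding symbolic_power_def by (intro is_ideal_saturation is_ideal_principal_ideal)

lemma power_mem_symbolic_power:
  assumes "is_prime_ideal P"
  shows "p ^ n \<in> symbolic_power P p n"
proof -
  have "p ^ n \<in> principal_ideal (p ^ n)"
    by simp
  then show ?thesis
    unfolding symbolic_power_def using saturation_superset[OF assms] by blast
qed

lemma symbolic_power_Suc_subset: "symbolic_power P p (Suc n) \<subseteq> symbolic_power P p n"
proof -
  have "p ^ n dvd p ^ Suc n"
    by (rule le_imp_power_dvd) simp
  have "principal_ideal (p ^ Suc n) \<subseteq> principal_ideal (p ^ n)"
  proof
    fix x assume "x \<in> principal_ideal (p ^ Suc n)"
    then have "p ^ Suc n dvd x"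
      by (simp only: mem_principal_ideal)
    then show "x \<in> principal_ideal (p ^ n)"
      unfolding mem_principal_ideal by (rule dvd_trans[OF \<open>p ^ n dvd p ^ Suc n\<close>])
  qed
  then show ?thesis
    unfolding symbolic_power_def by (rule saturation_mono)
qed

lemma symbolic_power_mod_element_step:
  fixes P Q :: "'a::comm_ring_1 set"
  assumes P: "is_prime_ideal P" and Q: "is_prime_ideal Q" and "y \<notin> P"
    and eq: "saturation Q (ideal_adjoin (symbolic_power P p (Suc n)) y) =
      saturation Q (ideal_adjoin (symbolic_power P p n) y)"
    and f: "f \<in> symbolic_power P p n"
  shows "\<exists>u g h. u \<notin> Q \<and> g \<in> symbolic_power P p n \<and> h \<in> symbolic_power P p (Suc n) \<and>
    u * f = y * g + h"
proof -
  define T where "T = symbolic_power P p"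
  have T_ideal: "is_ideal (T k)" for k
    unfolding T_def by (rule is_ideal_symbolic_power[OF P])
  have "f \<in> saturation Q (ideal_adjoin (T n) y)"
    using f ideal_adjoin_superset[of "T n" y] saturation_superset[OF Q, of "ideal_adjoin (T n) y"]
    unfolding T_def by blast
  then have "f \<in> saturation Q (ideal_adjoin (T (Suc n)) y)"
    using eq unfolding T_def by simp
  then obtain u where "u \<notin> Q" "u * f \<in> ideal_adjoin (T (Suc n)) y"
    by (rule saturationE)
  then obtain h r where h: "h \<in> T (Suc n)" and uf: "u * f = h + r * y"
    by (elim ideal_adjoinE)
  have "h \<in> T n"
    using h symbolic_power_Suc_subset[of P p n] unfolding T_def by blast
  then have "u * f - h \<in> T n"
    using is_ideal_diff[OF T_ideal is_ideal_mult_left[OF T_ideal]] f unfolding T_def by blast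
  moreover have "y * r = u * f - h"
    using uf by (simp add: algebra_simps)
  ultimately have "y * r \<in> saturation P (principal_ideal (p ^ n))"
    unfolding T_def symbolic_power_def by simp
  then have "r \<in> T n"
    unfolding T_def symbolic_power_def by (rule saturation_cancel[OF P \<open>y \<notin> P\<close>])
  moreover have "u * f = y * r + h"
    using uf by (simp add: ac_simps)
  ultimately show ?thesis
    using \<open>u \<notin> Q\<close> h unfolding T_def by blast
qed

text \<open>The Artinian property of \<open>R\<^sub>Q / (y)\<close> stabilises the chain \<open>p\<^sup>(\<^sup>n\<^sup>) + (y)\<close> in \<open>R\<^sub>Q\<close>.\<close>
lemma symbolic_powers_stable_mod_element:
  fixes P Q :: "'a::comm_ring_1 set"
  assumes P: "is_prime_ideal P" and Q: "is_prime_ideal Q"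
    and art: "artinian_at Q (principal_ideal y)" and "y \<notin> P"
  shows "\<exists>n. \<forall>f \<in> symbolic_power P p n. \<exists>u g h. u \<notin> Q \<and> g \<in> symbolic_power P p n \<and>
    h \<in> symbolic_power P p (Suc n) \<and> u * f = y * g + h"
proof -
  define L where "L n = saturation Q (ideal_adjoin (symbolic_power P p n) y)" for n
  have "saturated Q (L n) \<and> principal_ideal y \<subseteq> L n \<and> L (Suc n) \<subseteq> L n" for n
  proof (intro conjI)
    have T_ideal: "is_ideal (symbolic_power P p n)"
      by (rule is_ideal_symbolic_power[OF P])
    show "saturated Q (L n)"
      unfolding L_def by (intro saturated_saturation[OF Q] is_ideal_ideal_adjoin T_ideal)
    have "principal_ideal y \<subseteq> ideal_adjoin (symbolic_power P p n) y"
      by (intro principal_ideal_subset is_ideal_ideal_adjoin ideal_adjoin_mem T_ideal)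
    then show "principal_ideal y \<subseteq> L n"
      unfolding L_def using saturation_superset[OF Q] by blast
    show "L (Suc n) \<subseteq> L n"
      unfolding L_def by (intro saturation_mono ideal_adjoin_mono symbolic_power_Suc_subset)
  qed
  then obtain n where "\<forall>k\<ge>n. L k = L n"
    using art[unfolded artinian_at_def, rule_format, of L] by blast
  then have "L (Suc n) = L n"
    by (metis le_SucI order_refl)
  then show ?thesis
    unfolding L_def using symbolic_power_mod_element_step[OF P Q \<open>y \<notin> P\<close>] by blast
qed

lemma symbolic_power_mod_powers:
  fixes P Q :: "'a::comm_ring_1 set"
  assumes P: "is_prime_ideal P" and Q: "is_prime_ideal Q"
    and art: "artinian_at Q (principal_ideal y)" and "y \<notin> P"
  shows "\<exists>n. \<forall>j. \<exists>u g h. u \<notin> Q \<and> g \<in> symbolic_power P p n \<and>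
    h \<in> symbolic_power P p (Suc n) \<and> u * p ^ n = y ^ j * g + h"
proof -
  define T where "T = symbolic_power P p"
  have T_ideal: "is_ideal (T n)" for n
    unfolding T_def by (rule is_ideal_symbolic_power[OF P])
  obtain n where n: "\<And>f. f \<in> T n \<Longrightarrow> \<exists>u g h. u \<notin> Q \<and> g \<in> T n \<and> h \<in> T (Suc n) \<and> u * f = y * g + h"
    using symbolic_powers_stable_mod_element[OF assms] unfolding T_def by blast
  have "\<exists>u g h. u \<notin> Q \<and> g \<in> T n \<and> h \<in> T (Suc n) \<and> u * p ^ n = y ^ j * g + h" for j
  proof (induction j)
    case 0
    have "1 * p ^ n = y ^ 0 * p ^ n + 0"
      by simp
    then show ?case
      using prime_ideal_one_notin[OF Q] power_mem_symbolic_power[OF P] is_ideal_0[OF T_ideal]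
      unfolding T_def by blast
  next
    case (Suc j)
    then obtain u g h where ugh: "u \<notin> Q" "g \<in> T n" "h \<in> T (Suc n)" "u * p ^ n = y ^ j * g + h"
      by blast
    obtain u' g' h' where ugh': "u' \<notin> Q" "g' \<in> T n" "h' \<in> T (Suc n)" "u' * g = y * g' + h'"
      using n[OF ugh(2)] by blast
    have "(u' * u) * p ^ n = u' * (u * p ^ n)"
      by (simp add: mult.assoc)
    also have "\<dots> = u' * (y ^ j * g + h)"
      by (simp only: ugh(4))
    also have "\<dots> = y ^ j * (u' * g) + u' * h"
      by (simp add: algebra_simps)
    also have "\<dots> = y ^ j * (y * g' + h') + u' * h"
      by (simp only: ugh'(4))
    also have "\<dots> = y ^ Suc j * g' + (y ^ j * h' + u' * h)"
      by (simp add: algebra_simps)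
    finally have "(u' * u) * p ^ n = y ^ Suc j * g' + (y ^ j * h' + u' * h)" .
    moreover have "y ^ j * h' + u' * h \<in> T (Suc n)"
      using ugh(3) ugh'(3) is_ideal_add[OF T_ideal] is_ideal_mult_left[OF T_ideal] by blast
    moreover have "u' * u \<notin> Q"
      using ugh(1) ugh'(1) prime_ideal_mult[OF Q] by blast
    ultimately show ?case
      using ugh'(2) by blast
  qed
  then show ?thesis
    unfolding T_def by blast
qed

text \<open>Multiplying by \<open>d\<close> and dividing by \<open>p\<^sup>n\<close> turns a relation among symbolic powers into a
  congruence modulo \<open>P\<close>.\<close>
lemma symbolic_power_divide_mod_prime:
  fixes p :: "'a::idom"
  assumes P: "is_prime_ideal P" and "p \<in> P" "p \<noteq> 0"
    and d: "symbolic_power P p n \<subseteq> ideal_quotient (principal_ideal (p ^ n)) d"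
    and "g \<in> symbolic_power P p n" "h \<in> symbolic_power P p (Suc n)"
    and u: "u * p ^ n = y ^ j * g + h"
  shows "\<exists>r. d * u - y ^ j * r \<in> P"
proof -
  obtain r where r: "d * g = p ^ n * r"
    using d \<open>g \<in> symbolic_power P p n\<close> unfolding ideal_quotient_def by (auto elim!: dvdE)
  obtain v r' where "v \<notin> P" and v: "v * h = p ^ Suc n * r'"
    using \<open>h \<in> symbolic_power P p (Suc n)\<close> unfolding symbolic_power_def
    by (auto elim!: saturationE dvdE)
  have "p ^ n * (v * (d * u - y ^ j * r)) = v * d * (u * p ^ n) - v * y ^ j * (p ^ n * r)"
    by (simp add: algebra_simps)
  also have "\<dots> = d * (v * h)"
    by (simp add: u flip: r) (simp add: algebra_simps)
  also have "\<dots> = d * (p ^ Suc n * r')"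
    by (simp only: v)
  also have "\<dots> = p ^ n * (p * (d * r'))"
    by (simp add: algebra_simps)
  finally have "v * (d * u - y ^ j * r) = p * (d * r')"
    using \<open>p \<noteq> 0\<close> by simp
  also have "\<dots> \<in> P"
    by (rule is_ideal_mult_right[OF prime_ideal_is_ideal[OF P] \<open>p \<in> P\<close>])
  finally show ?thesis
    using prime_ideal_mult[OF P] \<open>v \<notin> P\<close> by blast
qed

theorem principal_ideal_theorem:
  fixes y :: "'a::idom"
  assumes N: "noetherian TYPE('a)" and Q: "minimal_prime_over (principal_ideal y) Q"
    and P: "is_prime_ideal P" and "P \<subset> Q"
  shows "P = {0}"
proof (rule ccontr)
  assume "P \<noteq> {0}"
  then obtain p where "p \<in> P" "p \<noteq> 0"
    using is_ideal_0[OF prime_ideal_is_ideal[OF P]] by blast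
  have Q_prime: "is_prime_ideal Q" and "y \<in> Q"
    using Q unfolding minimal_prime_over_def by auto
  have "y \<notin> P"
  proof
    assume "y \<in> P"
    then have "principal_ideal y \<subseteq> P"
      by (rule principal_ideal_subset[OF prime_ideal_is_ideal[OF P]])
    then show False
      using Q P \<open>P \<subset> Q\<close> unfolding minimal_prime_over_def by blast
  qed
  have art: "artinian_at Q (principal_ideal y)"
    by (rule artinian_at_minimal_prime_over[OF N is_ideal_principal_ideal Q])
  obtain n where n: "\<And>j. \<exists>u g h. u \<notin> Q \<and> g \<in> symbolic_power P p n \<and>
      h \<in> symbolic_power P p (Suc n) \<and> u * p ^ n = y ^ j * g + h"
    using symbolic_power_mod_powers[OF P Q_prime art \<open>y \<notin> P\<close>] by blast
  obtain d where "d \<notin> P" and d: "symbolic_power P p n \<subseteq> ideal_quotient (principal_ideal (p ^ n)) d"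
    using saturation_common_multiplier[OF N P is_ideal_principal_ideal] unfolding symbolic_power_def
    by blast
  have "\<exists>u r. u \<notin> Q \<and> d * u - y ^ j * r \<in> P" for j
    using n[of j] symbolic_power_divide_mod_prime[OF P \<open>p \<in> P\<close> \<open>p \<noteq> 0\<close> d] by metis
  then show False
    using not_divisible_by_all_powers[OF N P Q_prime _ \<open>y \<in> Q\<close> \<open>d \<notin> P\<close>] \<open>P \<subset> Q\<close> by blast
qed

section \<open>Countable prime avoidance\<close>

lemma is_ring_hom_diff: "is_ring_hom \<phi> \<Longrightarrow> \<phi> (a - b) = \<phi> a - \<phi> b"
  unfolding is_ring_hom_def by (metis add_diff_cancel diff_add_cancel)

lemma is_ring_hom_inverse:
  fixes \<phi> :: "'k::field \<Rightarrow> 'a::comm_ring_1"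
  shows "is_ring_hom \<phi> \<Longrightarrow> x \<noteq> 0 \<Longrightarrow> \<phi> (inverse x) * \<phi> x = 1"
  unfolding is_ring_hom_def by (metis left_inverse)

lemma poly_synthetic_div_in_ideal:
  fixes \<phi> :: "'k::field \<Rightarrow> 'a::comm_ring_1"
  assumes F: "is_ideal F" and \<phi>: "is_ring_hom \<phi>" and "l \<noteq> l0"
    and "poly f (\<phi> l) \<in> F" "poly f (\<phi> l0) \<in> F"
  shows "poly (synthetic_div f (\<phi> l0)) (\<phi> l) \<in> F"
proof -
  define h where "h = synthetic_div f (\<phi> l0)"
  have "poly f (\<phi> l) = (\<phi> l - \<phi> l0) * poly h (\<phi> l) + poly f (\<phi> l0)"
    using arg_cong[OF synthetic_div_correct'[where c="\<phi> l0" and p=f, symmetric], of "\<lambda>p. poly p (\<phi> l)"]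
    unfolding h_def by (simp add: algebra_simps)
  moreover have "poly f (\<phi> l) - poly f (\<phi> l0) \<in> F"
    by (rule is_ideal_diff[OF F assms(4,5)])
  ultimately have "\<phi> (l - l0) * poly h (\<phi> l) \<in> F"
    unfolding is_ring_hom_diff[OF \<phi>] by simp
  then have "\<phi> (inverse (l - l0)) * (\<phi> (l - l0) * poly h (\<phi> l)) \<in> F"
    by (rule is_ideal_mult_left[OF F])
  moreover have "l - l0 \<noteq> 0"
    using \<open>l \<noteq> l0\<close> by simp
  ultimately show ?thesis
    unfolding h_def using is_ring_hom_inverse[OF \<phi>] by (simp flip: mult.assoc)
qed

lemma coeff_in_ideal_if_synthetic_div:
  assumes F: "is_ideal F" and "poly f c \<in> F" and h: "\<And>j. coeff (synthetic_div f c) j \<in> F"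
  shows "coeff f i \<in> F"
proof -
  define h where "h = synthetic_div f c"
  have "coeff f i = - c * coeff h i + (case i of 0 \<Rightarrow> 0 | Suc j \<Rightarrow> coeff h j)
      + (if i = 0 then poly f c else 0)"
    using arg_cong[OF synthetic_div_correct'[where c=c and p=f, symmetric], of "\<lambda>p. coeff p i"]
    unfolding h_def by (simp add: coeff_pCons split: nat.split)
  moreover have "- c * coeff h i \<in> F"
    unfolding h_def by (rule is_ideal_mult_left[OF F h])
  moreover have "(case i of 0 \<Rightarrow> 0 | Suc j \<Rightarrow> coeff h j) \<in> F" "(if i = 0 then poly f c else 0) \<in> F"
    using h assms(2) is_ideal_0[OF F] unfolding h_def by (auto split: nat.split)
  ultimately show ?thesis
    using is_ideal_add[OF F] by metis
qed

text \<open>Vandermonde: divide out one interpolation node \<open>\<phi> l\<^sub>0\<close> at a time; the differences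
  \<open>\<phi> l - \<phi> l\<^sub>0\<close> of distinct nodes are units.\<close>
lemma coeff_in_ideal_if_poly_values_in_ideal:
  fixes \<phi> :: "'k::field \<Rightarrow> 'a::comm_ring_1"
  assumes F: "is_ideal F" and \<phi>: "is_ring_hom \<phi>" and "finite S"
    and "degree f < card S" and "\<forall>l\<in>S. poly f (\<phi> l) \<in> F"
  shows "coeff f i \<in> F"
  using assms(3-)
proof (induction S arbitrary: f i rule: finite_induct)
  case (insert l0 S)
  have "poly f (\<phi> l0) \<in> F"
    using insert.prems by simp
  show ?case
  proof (cases "S = {}")
    case True
    then have "degree f = 0"
      using insert.prems by simp
    then have "f = [:coeff f 0:]"
      by (rule degree_0_id[symmetric])
    then have "poly f (\<phi> l0) = coeff f 0"
      by (metis poly_pCons mult_zero_right poly_0 add.right_neutral)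
    then show ?thesis
      using \<open>poly f (\<phi> l0) \<in> F\<close> is_ideal_0[OF F] \<open>degree f = 0\<close> by (cases i) (auto simp: coeff_eq_0)
  next
    case False
    then have "card S \<ge> 1"
      using insert.hyps(1) by (simp add: Suc_leI card_gt_0_iff)
    then have "degree (synthetic_div f (\<phi> l0)) < card S"
      using insert.prems(1) insert.hyps unfolding degree_synthetic_div by simp
    moreover have "\<forall>l\<in>S. poly (synthetic_div f (\<phi> l0)) (\<phi> l) \<in> F"
    proof
      fix l assume "l \<in> S"
      then show "poly (synthetic_div f (\<phi> l0)) (\<phi> l) \<in> F"
        by (intro poly_synthetic_div_in_ideal[OF F \<phi>]) (use insert.hyps(2) insert.prems(2) in auto)
    qed
    ultimately show ?thesis
      using coeff_in_ideal_if_synthetic_div[OF F \<open>poly f (\<phi> l0) \<in> F\<close>] insert.IH by blast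
  qed
qed simp

lemma finite_poly_values_in_ideal:
  fixes \<phi> :: "'k::field \<Rightarrow> 'a::comm_ring_1"
  assumes F: "is_ideal F" and \<phi>: "is_ring_hom \<phi>" and "coeff f i \<notin> F"
  shows "finite {l. poly f (\<phi> l) \<in> F}"
proof (rule ccontr)
  assume "infinite {l. poly f (\<phi> l) \<in> F}"
  then obtain S where "finite S" "card S = Suc (degree f)" "S \<subseteq> {l. poly f (\<phi> l) \<in> F}"
    using infinite_arbitrarily_large by blast
  then have "coeff f i \<in> F"
    by (intro coeff_in_ideal_if_poly_values_in_ideal[OF F \<phi>]) auto
  with assms(3) show False ..
qed

lemma poly_Poly_in_ideal: "is_ideal Q \<Longrightarrow> set gs \<subseteq> Q \<Longrightarrow> poly (Poly gs) c \<in> Q"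
  by (induction gs) (auto simp: is_ideal_0 is_ideal_add is_ideal_mult_left)

text \<open>Prime avoidance for countably many ideals over an uncountable field: if \<open>g\<^sub>0, \<dots>, g\<^sub>m\<close> generate
  \<open>Q\<close>, the elements \<open>\<Sum> g\<^sub>i \<phi>(l)\<^sup>i\<close> of \<open>Q\<close> (\<open>l \<in> k\<close>) lie in a given \<open>F \<not>\<supseteq> Q\<close> only for finitely many \<open>l\<close>.\<close>
lemma ideal_avoids_countable_family:
  fixes \<phi> :: "'k::field \<Rightarrow> 'a::comm_ring_1" and Q :: "'a set" and \<F> :: "'a set set"
  assumes N: "noetherian TYPE('a)" and unc: "uncountable (UNIV :: 'k set)" and \<phi>: "is_ring_hom \<phi>"
    and Q: "is_ideal Q" and "countable \<F>" and \<F>: "\<And>F. F \<in> \<F> \<Longrightarrow> is_ideal F \<and> \<not> Q \<subseteq> F"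
  shows "\<exists>z\<in>Q. \<forall>F\<in>\<F>. z \<notin> F"
proof -
  obtain G where G: "finite G" "G \<subseteq> Q" "Q = gen_ideal G"
    using noetherian_finite_generators[OF N Q] by blast
  obtain gs where gs: "set gs = G"
    using finite_list[OF G(1)] by blast
  define f where "f = Poly gs"
  have fin: "finite {l. poly f (\<phi> l) \<in> F}" if "F \<in> \<F>" for F
  proof -
    have F: "is_ideal F" "\<not> Q \<subseteq> F"
      using \<F>[OF that] by auto
    then have "\<not> G \<subseteq> F"
      using G(3) gen_ideal_subset[of F G] by blast
    then obtain g where "g \<in> G" "g \<notin> F"
      by blast
    then obtain i where "i < length gs" "gs ! i \<notin> F"
      using gs by (metis in_set_conv_nth)
    then have "coeff f i \<notin> F"
      unfolding f_def by (simp add: nth_default_nth)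
    then show ?thesis
      by (rule finite_poly_values_in_ideal[OF F(1) \<phi>])
  qed
  have "countable (\<Union>F\<in>\<F>. {l. poly f (\<phi> l) \<in> F})"
    using \<open>countable \<F>\<close> by (rule countable_UN) (rule countable_finite[OF fin])
  then have "(\<Union>F\<in>\<F>. {l. poly f (\<phi> l) \<in> F}) \<noteq> UNIV"
    using unc by auto
  then obtain l where "l \<notin> (\<Union>F\<in>\<F>. {l. poly f (\<phi> l) \<in> F})"
    by blast
  moreover have "poly f (\<phi> l) \<in> Q"
    unfolding f_def using poly_Poly_in_ideal[OF Q] gs G(2) by blast
  ultimately show ?thesis
    by blast
qed

section \<open>Dimension and spectrum\<close>

lemma exists_denominator_multiple:
  fixes A :: "'a::idom set"
  assumes "0 \<notin> A" and A: "\<forall>q :: 'a fract. \<exists>r a. a \<in> A \<and> q = Fract r a" and "z \<noteq> 0"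
  shows "\<exists>a\<in>A. z dvd a"
proof -
  obtain r a where "a \<in> A" and fract: "Fract 1 z = Fract r a"
    using A by blast
  then have "a \<noteq> 0"
    using assms(1) by blast
  then have "1 * a = r * z"
    using fract eq_fract(1)[OF \<open>z \<noteq> 0\<close>] by blast
  then have "z dvd a"
    by (simp add: mult.commute)
  with \<open>a \<in> A\<close> show ?thesis
    by blast
qed

lemma minimal_prime_over_denominator:
  fixes A :: "'a::idom set"
  assumes N: "noetherian TYPE('a)" and "0 \<notin> A" and A: "\<forall>q :: 'a fract. \<exists>r a. a \<in> A \<and> q = Fract r a"
    and P: "is_prime_ideal P" "P \<noteq> {0}"
    and height_one: "\<And>P'. is_prime_ideal P' \<Longrightarrow> P' \<subset> P \<Longrightarrow> P' = {0}"
  shows "\<exists>a\<in>A. minimal_prime_over (principal_ideal a) P"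
proof -
  obtain z where "z \<in> P" "z \<noteq> 0"
    using P is_ideal_0[OF prime_ideal_is_ideal] by blast
  then obtain a where "a \<in> A" "z dvd a"
    using exists_denominator_multiple[OF \<open>0 \<notin> A\<close> A] by blast
  have "a \<noteq> 0"
    using \<open>a \<in> A\<close> \<open>0 \<notin> A\<close> by blast
  have "a \<in> principal_ideal z"
    using \<open>z dvd a\<close> by simp
  then have "a \<in> P"
    using principal_ideal_subset[OF prime_ideal_is_ideal[OF P(1)] \<open>z \<in> P\<close>] by blast
  then have "principal_ideal a \<subseteq> P"
    by (rule principal_ideal_subset[OF prime_ideal_is_ideal[OF P(1)]])
  then obtain P' where P': "minimal_prime_over (principal_ideal a) P'" "P' \<subseteq> P"
    using minimal_prime_over_exists[OF N is_ideal_principal_ideal P(1)] by blast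
  have "a \<in> P'" "is_prime_ideal P'"
    using P'(1) unfolding minimal_prime_over_def by auto
  then have "P' = P"
    using height_one P'(2) \<open>a \<noteq> 0\<close> by blast
  with P'(1) \<open>a \<in> A\<close> show ?thesis
    by blast
qed

lemma countable_minimal_primes_over_elements:
  fixes A :: "'a::comm_ring_1 set"
  assumes "noetherian TYPE('a)" "countable A"
  shows "countable {P. \<exists>a\<in>A. minimal_prime_over (principal_ideal a) P}"
proof -
  have "countable (\<Union>a\<in>A. {P. minimal_prime_over (principal_ideal a) P})"
    by (rule countable_UN[OF assms(2)])
      (rule countable_finite[OF finite_minimal_primes_over[OF assms(1) is_ideal_principal_ideal]])
  moreover have "(\<Union>a\<in>A. {P. minimal_prime_over (principal_ideal a) P}) =
      {P. \<exists>a\<in>A. minimal_prime_over (principal_ideal a) P}"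
    by blast
  ultimately show ?thesis
    by (simp only:)
qed

lemma nonzero_in_denominator_prime_below:
  fixes A P Q :: "'a::idom set"
  assumes N: "noetherian TYPE('a)" and "0 \<notin> A" and A: "\<forall>q :: 'a fract. \<exists>r a. a \<in> A \<and> q = Fract r a"
    and P: "is_prime_ideal P" "P \<noteq> {0}" and Q: "is_prime_ideal Q" and "P \<subset> Q"
    and "z \<in> Q" "z \<noteq> 0"
  shows "\<exists>Q'. (\<exists>a\<in>A. minimal_prime_over (principal_ideal a) Q') \<and> Q' \<subset> Q \<and> z \<in> Q'"
proof -
  have "principal_ideal z \<subseteq> Q"
    by (rule principal_ideal_subset[OF prime_ideal_is_ideal[OF Q] \<open>z \<in> Q\<close>])
  then obtain Q' where Q': "minimal_prime_over (principal_ideal z) Q'" "Q' \<subseteq> Q"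
    using minimal_prime_over_exists[OF N is_ideal_principal_ideal Q] by blast
  have "Q' \<noteq> Q"
    using principal_ideal_theorem[OF N _ P(1) \<open>P \<subset> Q\<close>] P(2) Q'(1) by blast
  have "z \<in> Q'" "is_prime_ideal Q'"
    using Q'(1) unfolding minimal_prime_over_def by auto
  moreover have "Q' \<noteq> {0}"
    using \<open>z \<in> Q'\<close> \<open>z \<noteq> 0\<close> by blast
  ultimately have "\<exists>a\<in>A. minimal_prime_over (principal_ideal a) Q'"
    using minimal_prime_over_denominator[OF N \<open>0 \<notin> A\<close> A] principal_ideal_theorem[OF N Q'(1)]
    by blast
  with Q'(2) \<open>Q' \<noteq> Q\<close> \<open>z \<in> Q'\<close> show ?thesis
    by blast
qed

lemma prime_below_prime_is_zero:
  fixes \<phi> :: "'k::field \<Rightarrow> 'a::idom" and A P Q :: "'a set"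
  assumes N: "noetherian TYPE('a)" and unc: "uncountable (UNIV :: 'k set)" and \<phi>: "is_ring_hom \<phi>"
    and "countable A" and "0 \<notin> A" and A: "\<forall>q :: 'a fract. \<exists>r a. a \<in> A \<and> q = Fract r a"
    and P: "is_prime_ideal P" and Q: "is_prime_ideal Q" and "P \<subset> Q"
  shows "P = {0}"
proof (rule ccontr)
  assume "P \<noteq> {0}"
  define \<F> where "\<F> = {P'. (\<exists>a\<in>A. minimal_prime_over (principal_ideal a) P') \<and> P' \<subset> Q}"
  have "countable \<F>"
    unfolding \<F>_def using countable_minimal_primes_over_elements[OF N \<open>countable A\<close>]
    by (rule countable_subset[rotated]) blast
  have \<F>_ideal: "is_ideal F \<and> \<not> Q \<subseteq> F" if "F \<in> \<F>" for F
    using that prime_ideal_is_ideal unfolding \<F>_def minimal_prime_over_def by blast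
  have in_\<F>: "\<exists>F\<in>\<F>. z \<in> F" if "z \<in> Q" "z \<noteq> 0" for z
    using nonzero_in_denominator_prime_below[OF N \<open>0 \<notin> A\<close> A P \<open>P \<noteq> {0}\<close> Q \<open>P \<subset> Q\<close> that]
    unfolding \<F>_def by blast
  obtain z where "z \<in> Q" and z: "\<forall>F\<in>\<F>. z \<notin> F"
    using ideal_avoids_countable_family[OF N unc \<phi> prime_ideal_is_ideal[OF Q] \<open>countable \<F>\<close> \<F>_ideal]
    by blast
  obtain p where "p \<in> Q" "p \<noteq> 0"
    using \<open>P \<noteq> {0}\<close> \<open>P \<subset> Q\<close> is_ideal_0[OF prime_ideal_is_ideal[OF P]] by blast
  then obtain F where "F \<in> \<F>"
    using in_\<F> by blast
  then have "z \<noteq> 0"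
    using z is_ideal_0 \<F>_ideal by blast
  then show False
    using in_\<F> \<open>z \<in> Q\<close> z by blast
qed

lemma krull_dim_eq_one:
  assumes "\<exists>P Q :: 'a::comm_ring_1 set. is_prime_ideal P \<and> is_prime_ideal Q \<and> P \<subset> Q"
    and no_chain: "\<And>P Q R :: 'a set. is_prime_ideal P \<Longrightarrow> is_prime_ideal Q \<Longrightarrow> is_prime_ideal R \<Longrightarrow>
      P \<subset> Q \<Longrightarrow> Q \<subset> R \<Longrightarrow> False"
  shows "krull_dim TYPE('a) = 1"
proof -
  define D where "D = {enat n | n. \<exists>P :: nat \<Rightarrow> 'a set.
      (\<forall>i\<le>n. is_prime_ideal (P i)) \<and> (\<forall>i<n. P i \<subset> P (Suc i))}"
  have "enat 1 \<in> D"
  proof -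
    obtain P Q :: "'a set" where "is_prime_ideal P" "is_prime_ideal Q" "P \<subset> Q"
      using assms(1) by blast
    define C where "C i = (if i = 0 then P else Q)" for i :: nat
    have "\<forall>i\<le>1. is_prime_ideal (C i)" "\<forall>i<1. C i \<subset> C (Suc i)"
      using \<open>is_prime_ideal P\<close> \<open>is_prime_ideal Q\<close> \<open>P \<subset> Q\<close> unfolding C_def by auto
    then show ?thesis
      unfolding D_def by blast
  qed
  moreover have "d \<le> 1" if "d \<in> D" for d
  proof -
    obtain n where "d = enat n" and
      "\<exists>P :: nat \<Rightarrow> 'a set. (\<forall>i\<le>n. is_prime_ideal (P i)) \<and> (\<forall>i<n. P i \<subset> P (Suc i))"
      using \<open>d \<in> D\<close> unfolding D_def by blast
    then obtain P :: "nat \<Rightarrow> 'a set" where P: "\<forall>i\<le>n. is_prime_ideal (P i)" "\<forall>i<n. P i \<subset> P (Suc i)"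
      by blast
    have "n \<le> 1"
    proof (rule ccontr)
      assume "\<not> n \<le> 1"
      then have "is_prime_ideal (P 0)" "is_prime_ideal (P 1)" "is_prime_ideal (P 2)"
        "P 0 \<subset> P 1" "P 1 \<subset> P 2"
        using P by (auto simp: numeral_2_eq_2)
      then show False
        by (rule no_chain)
    qed
    then show ?thesis
      using \<open>d = enat n\<close> by (simp add: one_enat_def)
  qed
  ultimately have "Sup D = 1"
    by (metis Sup_least Sup_upper antisym one_enat_def)
  then show ?thesis
    unfolding krull_dim_def D_def .
qed

lemma exists_nonzero_prime_ideal:
  assumes "noetherian TYPE('a::idom)" and "\<not> (\<forall>x::'a. x \<noteq> 0 \<longrightarrow> x dvd 1)"
  shows "\<exists>P :: 'a set. is_prime_ideal P \<and> {0} \<subset> P"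
proof -
  obtain x :: 'a where "x \<noteq> 0" "\<not> x dvd 1"
    using assms(2) by blast
  then have "1 \<notin> principal_ideal x"
    by simp
  then obtain P where "is_prime_ideal P" "principal_ideal x \<subseteq> P"
    using prime_ideal_exists[OF assms(1) is_ideal_principal_ideal] by blast
  moreover have "x \<in> principal_ideal x"
    by simp
  ultimately show ?thesis
    using \<open>x \<noteq> 0\<close> is_ideal_0[OF prime_ideal_is_ideal] by blast
qed

lemma countable_prime_ideals:
  fixes A :: "'a::idom set"
  assumes N: "noetherian TYPE('a)" and "countable A" and "0 \<notin> A"
    and A: "\<forall>q :: 'a fract. \<exists>r a. a \<in> A \<and> q = Fract r a"
    and height_one: "\<And>P Q :: 'a set. is_prime_ideal P \<Longrightarrow> is_prime_ideal Q \<Longrightarrow> P \<subset> Q \<Longrightarrow> P = {0}"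
  shows "countable {P :: 'a set. is_prime_ideal P}"
proof (rule countable_subset)
  show "{P. is_prime_ideal P} \<subseteq> insert {0} {P. \<exists>a\<in>A. minimal_prime_over (principal_ideal a) P}"
  proof
    fix P :: "'a set" assume "P \<in> {P. is_prime_ideal P}"
    then have "is_prime_ideal P"
      by simp
    then show "P \<in> insert {0} {P. \<exists>a\<in>A. minimal_prime_over (principal_ideal a) P}"
      using minimal_prime_over_denominator[OF N \<open>0 \<notin> A\<close> A \<open>is_prime_ideal P\<close>] height_one[of _ P]
      by blast
  qed
  show "countable (insert {0} {P. \<exists>a\<in>A. minimal_prime_over (principal_ideal a) P})"
    using countable_minimal_primes_over_elements[OF N \<open>countable A\<close>] by simp
qed

theorem lemma5p2:
  fixes \<phi> :: "'k::field \<Rightarrow> 'a::idom"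
    and A :: "'a set"
  assumes noeth: "noetherian TYPE('a)"
    and uncountable_field: "uncountable (UNIV :: 'k set)"
    and alg: "is_ring_hom \<phi>"
    and not_field: "\<not> (\<forall>x::'a. x \<noteq> 0 \<longrightarrow> x dvd 1)"
    and A_countable: "countable A"
    and A_sub: "A \<subseteq> UNIV - {0}"
    and A_mult: "1 \<in> A" "\<forall>a\<in>A. \<forall>b\<in>A. a * b \<in> A"
    and A_loc: "\<forall>q :: 'a fract. \<exists>r a. a \<in> A \<and> q = Fract r a"
  shows "krull_dim TYPE('a) = 1 \<and> countable {P :: 'a set. is_prime_ideal P}"
proof
  have "0 \<notin> A"
    using A_sub by blast
  have height_one: "P = {0}" if "is_prime_ideal P" "is_prime_ideal Q" "P \<subset> Q" for P Q :: "'a set"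
    by (rule prime_below_prime_is_zero[OF noeth uncountable_field alg A_countable \<open>0 \<notin> A\<close> A_loc that])
  show "krull_dim TYPE('a) = 1"
  proof (rule krull_dim_eq_one)
    show "\<exists>P Q :: 'a set. is_prime_ideal P \<and> is_prime_ideal Q \<and> P \<subset> Q"
      using zero_is_prime_ideal exists_nonzero_prime_ideal[OF noeth not_field] by blast
    show False if "is_prime_ideal P" "is_prime_ideal Q" "is_prime_ideal R" "P \<subset> Q" "Q \<subset> R"
      for P Q R :: "'a set"
      using height_one[OF that(2,3,5)] that(4) is_ideal_0[OF prime_ideal_is_ideal[OF that(1)]] by blast
  qed
  show "countable {P :: 'a set. is_prime_ideal P}"
    by (rule countable_prime_ideals[OF noeth A_countable \<open>0 \<notin> A\<close> A_loc height_one])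
qed

end
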